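(* Let $f\in C^2([0,\infty))$ satisfy $f(u)>0$ and $f'(u)>0$ for all $u>0$, and assume $f$ is log-concave, i.e. \[ f''(u)f(u)-f'(u)^2<0\quad\text{for all } u>0 . \] Let $u(r)$ be a positive solution of \[ u''+\frac{1}{r}u'+f(u)=0,\quad 0<r<1,\qquad u'(0)=u(1)=0 . \] Then any non-trivial solution $w(r)$ of the linearized problem \[ w''+\frac{1}{r}w'+f'(u(r))w=0,\quad 0<r<1,\qquad w'(0)=w(1)=0 \] does not vanish on $[0,1)$; i.e., replacing $w$ by $-w$ if necessary, $w(r)>0$ on $[0,1)$.
   Context: This is the radial form of the problem $\Delta u+f(u)=0$ on the unit disk in $\mathbb{R}^2$ with zero Dirichlet boundary data. *)

theory Defs
  imports "HOL-Analysis.Analysis"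
begin

end

theory Submission
  imports Defs
begin

text \<open>Suppose \<open>w\<close> had a first zero \<open>\<xi> \<in> (0,1)\<close>, with \<open>w > 0\<close> on \<open>[0,\<xi>)\<close>. A direct
  computation shows that \<open>v = r u' + c\<close> satisfies \<open>v'' + v'/r + f'(u) v = c f'(u) - 2 f(u)\<close>,
  so \<open>W = r (v w' - v' w)\<close> has \<open>W' = -r w (c f'(u) - 2 f(u))\<close>. Choosing \<open>c = -\<xi> u'(\<xi>)\<close>
  makes \<open>W(0) = W(\<xi>) = 0\<close>; Rolle gives a point \<open>r\<^sub>1\<close> where \<open>c f'(u) = 2 f(u)\<close>, and since
  \<open>f/f'\<close> increases (log-concavity) while \<open>u\<close> decreases, \<open>c f'(u) > 2 f(u)\<close> on \<open>(r\<^sub>1, 1)\<close>.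
  On a nodal interval of \<open>w\<close> to the right of \<open>\<xi>\<close>, where \<open>r u' + c \<le> 0\<close>, the monotonicity of
  \<open>W\<close> then contradicts the signs of \<open>W\<close> at the endpoints. Finally \<open>w(0) \<noteq> 0\<close>, since otherwise
  an energy estimate forces \<open>w = 0\<close>.\<close>

lemma continuous_nonvanishing_imp_sign_constant:
  fixes g :: "'a::topological_space \<Rightarrow> real"
  assumes "continuous_on S g" and "connected S" and "\<And>x. x \<in> S \<Longrightarrow> g x \<noteq> 0"
  shows "(\<forall>x\<in>S. g x > 0) \<or> (\<forall>x\<in>S. g x < 0)"
proof (rule ccontr)
  assume "\<not> ?thesis"
  then obtain x y where "x \<in> S" "y \<in> S" "g x < 0" "0 < g y"
    using assms(3) by (meson linorder_neqE_linordered_idom)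
  moreover have "connected (g ` S)"
    using assms(1,2) by (rule connected_continuous_image)
  ultimately have "0 \<in> g ` S"
    unfolding connected_iff_interval by (meson image_eqI less_imp_le)
  with assms(3) show False by force
qed

lemma compact_zero_set_Icc:
  fixes g :: "real \<Rightarrow> real"
  assumes "continuous_on {p..q} g"
  shows "compact {s \<in> {p..q}. g s = 0}"
  using assms continuous_closed_preimage_constant[OF assms closed_atLeastAtMost]
  by (auto simp: compact_eq_bounded_closed intro: bounded_subset[OF bounded_closed_interval])

lemma first_zero_after:
  fixes g :: "real \<Rightarrow> real"
  assumes "continuous_on {t..q} g" and "t \<le> q" and "g q = 0"
  obtains b where "t \<le> b" "b \<le> q" "g b = 0" "\<And>s. t \<le> s \<Longrightarrow> s < b \<Longrightarrow> g s \<noteq> 0"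
proof -
  have "q \<in> {s \<in> {t..q}. g s = 0}"
    using assms(2,3) by simp
  then obtain b where "b \<in> {s \<in> {t..q}. g s = 0}" "\<And>s. s \<in> {s \<in> {t..q}. g s = 0} \<Longrightarrow> b \<le> s"
    using compact_attains_inf[OF compact_zero_set_Icc[OF assms(1)]] by blast
  with that show ?thesis
    by (metis (mono_tags, lifting) atLeastAtMost_iff leD less_le_trans mem_Collect_eq order.strict_implies_order)
qed

lemma last_zero_before:
  fixes g :: "real \<Rightarrow> real"
  assumes "continuous_on {p..t} g" and "p \<le> t" and "g p = 0"
  obtains a where "p \<le> a" "a \<le> t" "g a = 0" "\<And>s. a < s \<Longrightarrow> s \<le> t \<Longrightarrow> g s \<noteq> 0"
proof -
  have "p \<in> {s \<in> {p..t}. g s = 0}"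
    using assms(2,3) by simp
  then obtain a where "a \<in> {s \<in> {p..t}. g s = 0}" "\<And>s. s \<in> {s \<in> {p..t}. g s = 0} \<Longrightarrow> s \<le> a"
    using compact_attains_sup[OF compact_zero_set_Icc[OF assms(1)]] by blast
  with that show ?thesis
    by (metis (mono_tags, lifting) atLeastAtMost_iff leD le_less_trans mem_Collect_eq order.strict_implies_order)
qed

lemma has_real_derivative_nonneg_at_left_min:
  fixes g :: "real \<Rightarrow> real"
  assumes "(g has_real_derivative D) (at a within {a..b})" and "a < b"
    and "\<And>s. a < s \<Longrightarrow> s < b \<Longrightarrow> g a \<le> g s"
  shows "0 \<le> D"
proof (rule ccontr)
  assume "\<not> 0 \<le> D"
  then obtain d where "d > 0" and dec: "\<And>h. 0 < h \<Longrightarrow> a + h \<in> {a..b} \<Longrightarrow> h < d \<Longrightarrow> g (a + h) < g a"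
    using has_real_derivative_neg_dec_right[OF assms(1)] by force
  define h where "h = min (d / 2) ((b - a) / 2)"
  have "0 < h" "h < d" "a + h < b"
    using \<open>d > 0\<close> assms(2) min.cobounded2[of "d / 2" "(b - a) / 2"] by (auto simp: h_def)
  then show False
    using dec[of h] assms(3)[of "a + h"] by force
qed

lemma has_real_derivative_nonpos_at_right_min:
  fixes g :: "real \<Rightarrow> real"
  assumes "(g has_real_derivative D) (at b within {a..b})" and "a < b"
    and "\<And>s. a < s \<Longrightarrow> s < b \<Longrightarrow> g b \<le> g s"
  shows "D \<le> 0"
proof (rule ccontr)
  assume "\<not> D \<le> 0"
  then obtain d where "d > 0" and inc: "\<And>h. 0 < h \<Longrightarrow> b - h \<in> {a..b} \<Longrightarrow> h < d \<Longrightarrow> g (b - h) < g b"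
    using has_real_derivative_pos_inc_left[OF assms(1)] by force
  define h where "h = min (d / 2) ((b - a) / 2)"
  have "0 < h" "h < d" "a < b - h"
    using \<open>d > 0\<close> assms(2) min.cobounded2[of "d / 2" "(b - a) / 2"] by (auto simp: h_def)
  then show False
    using inc[of h] assms(3)[of "b - h"] by force
qed

lemma nodal_interval_around:
  fixes g :: "real \<Rightarrow> real"
  assumes "continuous_on {p..q} g" and "g p = 0" "g q = 0" and "p < t" "t < q" "g t < 0"
  obtains a b where "p \<le> a" "a < t" "t < b" "b \<le> q" "g a = 0" "g b = 0"
    "\<And>s. s \<in> {a<..<b} \<Longrightarrow> g s < 0"
proof -
  obtain a where a: "p \<le> a" "a \<le> t" "g a = 0" and a_last: "\<And>s. a < s \<Longrightarrow> s \<le> t \<Longrightarrow> g s \<noteq> 0"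
    by (rule last_zero_before[of p t g]) (use assms in \<open>auto intro: continuous_on_subset\<close>)
  obtain b where b: "t \<le> b" "b \<le> q" "g b = 0" and b_first: "\<And>s. t \<le> s \<Longrightarrow> s < b \<Longrightarrow> g s \<noteq> 0"
    by (rule first_zero_after[of t q g]) (use assms in \<open>auto intro: continuous_on_subset\<close>)
  have t_in: "t \<in> {a<..<b}"
    using a b \<open>g t < 0\<close> by (metis greaterThanLessThan_iff less_eq_real_def less_irrefl)
  have "g s \<noteq> 0" if "s \<in> {a<..<b}" for s
    using a_last[of s] b_first[of s] that by (cases "s \<le> t") auto
  moreover have "continuous_on {a<..<b} g"
    using a b assms by (intro continuous_on_subset[OF assms(1)]) auto
  ultimately have "(\<forall>s\<in>{a<..<b}. g s > 0) \<or> (\<forall>s\<in>{a<..<b}. g s < 0)"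
    by (intro continuous_nonvanishing_imp_sign_constant) auto
  with t_in \<open>g t < 0\<close> have "\<forall>s\<in>{a<..<b}. g s < 0"
    using less_asym by blast
  with that a b t_in show ?thesis
    by auto
qed

lemma radial_energy_growth_bound:
  fixes a b b' q s C :: real
  assumes "b' + b / s + q * a = 0" and "0 < s" and "\<bar>1 - q\<bar> \<le> C"
  shows "2 * a * b + 2 * b * b' \<le> C * (a\<^sup>2 + b\<^sup>2)"
proof -
  have "b' = - b / s - q * a"
    using assms(1) by linarith
  then have "2 * a * b + 2 * b * b' = 2 * a * b * (1 - q) - 2 * b\<^sup>2 / s"
    by (simp add: power2_eq_square right_diff_distrib diff_divide_distrib)
  also have "\<dots> \<le> 2 * a * b * (1 - q)"
    using assms(2) by simp
  also have "\<dots> \<le> \<bar>2 * a * b\<bar> * \<bar>1 - q\<bar>"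
    by (metis abs_ge_self abs_mult)
  also have "\<dots> \<le> (a\<^sup>2 + b\<^sup>2) * C"
    using sum_squares_bound[of "\<bar>a\<bar>" "\<bar>b\<bar>"] assms(3) by (intro mult_mono) (auto simp: abs_mult)
  finally show ?thesis
    by (simp add: mult.commute)
qed

text \<open>Energy estimate: the term \<open>-w'/r\<close> only dissipates \<open>w\<^sup>2 + w'\<^sup>2\<close>, so Gronwall's argument
  works despite the singularity at the centre.\<close>

lemma radial_linear_ode_zero_at_centre:
  fixes w w1 w2 q :: "real \<Rightarrow> real"
  assumes w_d1: "\<And>r. r \<in> {0..1} \<Longrightarrow> (w has_real_derivative w1 r) (at r within {0..1})"
    and w_d2: "\<And>r. r \<in> {0..1} \<Longrightarrow> (w1 has_real_derivative w2 r) (at r within {0..1})"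
    and q_cont: "continuous_on {0..1} q"
    and w_eq: "\<And>r. r \<in> {0<..<1} \<Longrightarrow> w2 r + w1 r / r + q r * w r = 0"
    and "w 0 = 0" "w1 0 = 0"
    and r: "r \<in> {0..1}"
  shows "w r = 0"
proof -
  obtain K where K: "\<And>s. s \<in> {0..1} \<Longrightarrow> \<bar>q s\<bar> \<le> K"
    using compact_imp_bounded[OF compact_continuous_image[OF q_cont compact_Icc]]
    unfolding bounded_iff by fastforce
  define C where "C = 1 + \<bar>K\<bar>"
  define G where "G s = ((w s)\<^sup>2 + (w1 s)\<^sup>2) * exp (- (C * s))" for s
  have G_decreasing: "\<exists>y. (G has_real_derivative y) (at s) \<and> y \<le> 0" if s: "s \<in> {0<..<1}" for s
  proof -
    have at: "at s within {0..1} = at s"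
      using s by (simp add: at_within_Icc_at)
    have "(G has_real_derivative
        ((2 * w s * w1 s + 2 * w1 s * w2 s) - C * ((w s)\<^sup>2 + (w1 s)\<^sup>2)) * exp (- (C * s))) (at s)"
      unfolding G_def using w_d1[of s] w_d2[of s] s
      by (auto simp: at intro!: derivative_eq_intros simp: power2_eq_square algebra_simps)
    moreover have "2 * w s * w1 s + 2 * w1 s * w2 s \<le> C * ((w s)\<^sup>2 + (w1 s)\<^sup>2)"
      using w_eq[OF s] s K[of s] unfolding C_def
      by (intro radial_energy_growth_bound) (auto simp: abs_le_iff)
    ultimately show ?thesis
      by (metis diff_le_0_iff_le exp_ge_zero mult_nonpos_nonneg)
  qed
  have "continuous_on {0..1} G"
    unfolding G_def
    by (intro continuous_intros DERIV_continuous_on[OF w_d1] DERIV_continuous_on[OF w_d2])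
  then have "G r \<le> G 0"
  proof (rule DERIV_nonpos_imp_decreasing_open[rotated 2, OF continuous_on_subset])
    show "{0..r} \<subseteq> {0..1}" "0 \<le> r"
      using r by auto
  qed (use r G_decreasing in auto)
  also have "G 0 = 0"
    by (simp add: G_def assms)
  finally show ?thesis
    by (simp add: G_def mult_le_0_iff sum_power2_le_zero_iff)
qed

locale radial_ground_state =
  fixes f f1 f2 u u1 u2 :: "real \<Rightarrow> real"
  assumes f_d1: "\<And>x. x \<ge> 0 \<Longrightarrow> (f has_real_derivative f1 x) (at x within {0..})"
    and f_d2: "\<And>x. x \<ge> 0 \<Longrightarrow> (f1 has_real_derivative f2 x) (at x within {0..})"
    and f_pos: "\<And>x. x > 0 \<Longrightarrow> f x > 0"
    and f1_pos: "\<And>x. x > 0 \<Longrightarrow> f1 x > 0"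
    and f_logconc: "\<And>x. x > 0 \<Longrightarrow> f2 x * f x - (f1 x)\<^sup>2 < 0"
    and u_d1: "\<And>r. r \<in> {0..1} \<Longrightarrow> (u has_real_derivative u1 r) (at r within {0..1})"
    and u_d2: "\<And>r. r \<in> {0..1} \<Longrightarrow> (u1 has_real_derivative u2 r) (at r within {0..1})"
    and u_eq: "\<And>r. r \<in> {0<..<1} \<Longrightarrow> u2 r + u1 r / r + f (u r) = 0"
    and u1_0: "u1 0 = 0" and u_1: "u 1 = 0"
    and u_pos: "\<And>r. r \<in> {0..<1} \<Longrightarrow> u r > 0"
begin

lemma f_has_derivative: "x > 0 \<Longrightarrow> (f has_real_derivative f1 x) (at x)"
  using f_d1[of x] at_within_interior[of x "{0..}"] by simp

lemma f1_has_derivative: "x > 0 \<Longrightarrow> (f1 has_real_derivative f2 x) (at x)"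
  using f_d2[of x] at_within_interior[of x "{0..}"] by simp

lemma u_has_derivative: "r \<in> {0<..<1} \<Longrightarrow> (u has_real_derivative u1 r) (at r)"
  using u_d1[of r] at_within_Icc_at[of 0 r 1] by simp

lemma u1_has_derivative: "r \<in> {0<..<1} \<Longrightarrow> (u1 has_real_derivative u2 r) (at r)"
  using u_d2[of r] at_within_Icc_at[of 0 r 1] by simp

lemma continuous_on_u: "continuous_on {0..1} u"
  by (rule DERIV_continuous_on[OF u_d1])

lemma continuous_on_u1: "continuous_on {0..1} u1"
  by (rule DERIV_continuous_on[OF u_d2])

lemma u_nonneg: "r \<in> {0..1} \<Longrightarrow> u r \<ge> 0"
  using u_pos[of r] u_1 by (cases "r = 1") auto

lemma continuous_on_f_u: "continuous_on {0..1} (\<lambda>r. f (u r))"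
  by (rule continuous_on_compose2[OF DERIV_continuous_on[OF f_d1] continuous_on_u])
    (auto dest: u_nonneg)

lemma continuous_on_f1_u: "continuous_on {0..1} (\<lambda>r. f1 (u r))"
  by (rule continuous_on_compose2[OF DERIV_continuous_on[OF f_d2] continuous_on_u])
    (auto dest: u_nonneg)

lemma f_u_has_derivative:
  "r \<in> {0<..<1} \<Longrightarrow> ((\<lambda>r. f (u r)) has_real_derivative f1 (u r) * u1 r) (at r)"
  by (rule DERIV_chain2[OF f_has_derivative u_has_derivative]) (auto intro: u_pos)

lemma u2_eq: "r \<in> {0<..<1} \<Longrightarrow> u2 r = - u1 r / r - f (u r)"
  using u_eq[of r] by linarith

text \<open>The flux \<open>r u'\<close> has derivative \<open>-r f(u) < 0\<close>.\<close>

lemma flux_strict_decreasing: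
  assumes "0 \<le> a" "a < b" "b \<le> 1"
  shows "b * u1 b < a * u1 a"
proof (rule DERIV_neg_imp_decreasing_open[OF \<open>a < b\<close>])
  fix x assume x: "a < x" "x < b"
  then have "x \<in> {0<..<1}"
    using assms by simp
  then have "((\<lambda>r. r * u1 r) has_real_derivative - (x * f (u x))) (at x)"
    by (auto intro!: derivative_eq_intros u1_has_derivative simp: u2_eq field_simps)
  moreover have "x * f (u x) > 0"
    using x assms by (simp add: f_pos u_pos)
  ultimately show "\<exists>y. ((\<lambda>r. r * u1 r) has_real_derivative y) (at x) \<and> y < 0"
    by (intro exI conjI) auto
qed (use assms in \<open>intro continuous_intros continuous_on_subset[OF continuous_on_u1], auto\<close>)

lemma u1_neg: "0 < r \<Longrightarrow> r \<le> 1 \<Longrightarrow> u1 r < 0"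
  using flux_strict_decreasing[of 0 r] u1_0 by (simp add: mult_less_0_iff)

lemma u_strict_decreasing: "0 \<le> a \<Longrightarrow> a < b \<Longrightarrow> b \<le> 1 \<Longrightarrow> u b < u a"
  by (rule DERIV_neg_imp_decreasing_open)
    (auto intro!: exI u_has_derivative u1_neg continuous_on_subset[OF continuous_on_u])

lemma f_div_f1_strict_mono:
  assumes "0 < x" "x < y"
  shows "f x / f1 x < f y / f1 y"
proof (rule DERIV_pos_imp_increasing_open[OF \<open>x < y\<close>])
  fix z assume "x < z" "z < y"
  then have z: "z > 0"
    using assms by simp
  have "((\<lambda>z. f z / f1 z) has_real_derivative ((f1 z)\<^sup>2 - f2 z * f z) / (f1 z)\<^sup>2) (at z)"
    using f1_pos[OF z]
    by (auto intro!: derivative_eq_intros f_has_derivative f1_has_derivative z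
        simp: power2_eq_square algebra_simps)
  moreover have "((f1 z)\<^sup>2 - f2 z * f z) / (f1 z)\<^sup>2 > 0"
    using f1_pos[OF z] f_logconc[OF z] by simp
  ultimately show "\<exists>d. ((\<lambda>z. f z / f1 z) has_real_derivative d) (at z) \<and> d > 0"
    by blast
next
  have "f1 z \<noteq> 0" if "z \<in> {x..y}" for z
    using that assms f1_pos[of z] by force
  then show "continuous_on {x..y} (\<lambda>z. f z / f1 z)"
    using assms
    by (intro continuous_on_divide continuous_on_subset[OF DERIV_continuous_on[OF f_d1]]
        continuous_on_subset[OF DERIV_continuous_on[OF f_d2]]) auto
qed

lemma nonlinearity_balance_pos:
  assumes "0 < r1" "r1 < r" "r < 1" and balance: "c * f1 (u r1) = 2 * f (u r1)"
  shows "c * f1 (u r) - 2 * f (u r) > 0"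
proof -
  have "0 < u r" "u r < u r1"
    using assms u_pos[of r] u_strict_decreasing[of r1 r] by auto
  then have "f (u r) / f1 (u r) < f (u r1) / f1 (u r1)"
    by (rule f_div_f1_strict_mono)
  also have "\<dots> = c / 2"
    using balance f1_pos[of "u r1"] u_pos[of r1] assms by (simp add: field_simps)
  finally show ?thesis
    using f1_pos[OF \<open>0 < u r\<close>] by (simp add: field_simps)
qed

end

locale radial_linearization = radial_ground_state +
  fixes w w1 w2 :: "real \<Rightarrow> real"
  assumes w_d1: "\<And>r. r \<in> {0..1} \<Longrightarrow> (w has_real_derivative w1 r) (at r within {0..1})"
    and w_d2: "\<And>r. r \<in> {0..1} \<Longrightarrow> (w1 has_real_derivative w2 r) (at r within {0..1})"
    and w_eq: "\<And>r. r \<in> {0<..<1} \<Longrightarrow> w2 r + w1 r / r + f1 (u r) * w r = 0"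
    and w1_0: "w1 0 = 0" and w_1: "w 1 = 0"
begin

lemma w_has_derivative: "r \<in> {0<..<1} \<Longrightarrow> (w has_real_derivative w1 r) (at r)"
  using w_d1[of r] at_within_Icc_at[of 0 r 1] by simp

lemma w1_has_derivative: "r \<in> {0<..<1} \<Longrightarrow> (w1 has_real_derivative w2 r) (at r)"
  using w_d2[of r] at_within_Icc_at[of 0 r 1] by simp

lemma continuous_on_w: "continuous_on {0..1} w"
  by (rule DERIV_continuous_on[OF w_d1])

lemma continuous_on_w1: "continuous_on {0..1} w1"
  by (rule DERIV_continuous_on[OF w_d2])

lemma w2_eq: "r \<in> {0<..<1} \<Longrightarrow> w2 r = - w1 r / r - f1 (u r) * w r"
  using w_eq[of r] by linarith

lemma radial_linearization_uminus:
  "radial_linearization f f1 f2 u u1 u2 (\<lambda>r. - w r) (\<lambda>r. - w1 r) (\<lambda>r. - w2 r)"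
proof unfold_locales
  fix r :: real
  show "r \<in> {0..1} \<Longrightarrow> ((\<lambda>r. - w r) has_real_derivative - w1 r) (at r within {0..1})"
    by (rule DERIV_minus[OF w_d1])
  show "r \<in> {0..1} \<Longrightarrow> ((\<lambda>r. - w1 r) has_real_derivative - w2 r) (at r within {0..1})"
    by (rule DERIV_minus[OF w_d2])
  show "r \<in> {0<..<1} \<Longrightarrow> - w2 r + - w1 r / r + f1 (u r) * - w r = 0"
    using w_eq[of r] by (simp add: minus_divide_left [symmetric])
qed (simp_all add: w1_0 w_1)

text \<open>The flux \<open>r w'\<close> has derivative \<open>-r f'(u) w\<close>.\<close>

lemma w1_neg_at_first_zero:
  assumes "0 < \<xi>" "\<xi> < 1" and pos: "\<And>r. r \<in> {0<..<\<xi>} \<Longrightarrow> w r > 0"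
  shows "w1 \<xi> < 0"
proof -
  have "\<xi> * w1 \<xi> < 0 * w1 0"
  proof (rule DERIV_neg_imp_decreasing_open[OF \<open>0 < \<xi>\<close>])
    fix x assume x: "0 < x" "x < \<xi>"
    then have "x \<in> {0<..<1}"
      using assms by simp
    then have "((\<lambda>r. r * w1 r) has_real_derivative - (x * f1 (u x) * w x)) (at x)"
      by (auto intro!: derivative_eq_intros w1_has_derivative simp: w2_eq field_simps)
    moreover have "x * f1 (u x) * w x > 0"
      using x assms pos[of x] f1_pos[of "u x"] u_pos[of x] by simp
    ultimately show "\<exists>y. ((\<lambda>r. r * w1 r) has_real_derivative y) (at x) \<and> y < 0"
      by (intro exI conjI) auto
  qed (use assms in \<open>intro continuous_intros continuous_on_subset[OF continuous_on_w1], auto\<close>)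
  then show ?thesis
    using assms by (simp add: mult_less_0_iff)
qed

text \<open>The \<open>W = r (v w' - v' w)\<close> of the proof idea, with \<open>v = r u' + c\<close> and \<open>v' = -r f(u)\<close>.\<close>

definition wronskian :: "real \<Rightarrow> real \<Rightarrow> real" where
  "wronskian c r = r * ((r * u1 r + c) * w1 r + r * f (u r) * w r)"

lemma wronskian_has_derivative:
  assumes "r \<in> {0<..<1}"
  shows "(wronskian c has_real_derivative - (r * w r * (c * f1 (u r) - 2 * f (u r)))) (at r)"
  unfolding wronskian_def using assms
  by (auto intro!: derivative_eq_intros f_u_has_derivative u_has_derivative u1_has_derivative
      w_has_derivative w1_has_derivative simp: u2_eq w2_eq field_simps)

lemma continuous_on_wronskian: "continuous_on {0..1} (wronskian c)"
  unfolding wronskian_def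
  by (intro continuous_intros continuous_on_u1 continuous_on_w continuous_on_w1 continuous_on_f_u)

lemma nodal_interval_impossible:
  assumes "0 \<le> a" "a < b" "b \<le> 1" and "w a = 0" "w b = 0"
    and pos: "\<And>r. r \<in> {a<..<b} \<Longrightarrow> w r > 0"
    and balance: "\<And>r. r \<in> {a<..<b} \<Longrightarrow> c * f1 (u r) - 2 * f (u r) > 0"
    and "a * u1 a + c \<le> 0" "b * u1 b + c \<le> 0"
  shows False
proof -
  have "wronskian c b < wronskian c a"
  proof (rule DERIV_neg_imp_decreasing_open[OF \<open>a < b\<close>])
    fix x assume "a < x" "x < b"
    then have "(wronskian c has_real_derivative - (x * w x * (c * f1 (u x) - 2 * f (u x)))) (at x)"
      using assms by (intro wronskian_has_derivative) auto
    moreover have "x * w x * (c * f1 (u x) - 2 * f (u x)) > 0"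
      using \<open>a < x\<close> \<open>x < b\<close> assms pos[of x] balance[of x] by simp
    ultimately show "\<exists>y. (wronskian c has_real_derivative y) (at x) \<and> y < 0"
      by (intro exI conjI) auto
  qed (use assms in \<open>auto intro: continuous_on_subset[OF continuous_on_wronskian]\<close>)
  have "0 \<le> w1 a" "w1 b \<le> 0"
  proof -
    have w_deriv: "(w has_real_derivative w1 x) (at x within {a..b})" if "x \<in> {a..b}" for x
      using that assms by (intro DERIV_subset[OF w_d1]) auto
    have w_min: "w a \<le> w s" "w b \<le> w s" if "a < s" "s < b" for s
      using that assms less_imp_le[OF pos[of s]] by auto
    show "0 \<le> w1 a" "w1 b \<le> 0"
      using \<open>a < b\<close> w_deriv[of a] w_deriv[of b] w_min
        has_real_derivative_nonneg_at_left_min[of w "w1 a" a b]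
        has_real_derivative_nonpos_at_right_min[of w "w1 b" b a] by auto
  qed
  then have "wronskian c a \<le> 0" "0 \<le> wronskian c b"
    using assms unfolding wronskian_def
    by (simp_all add: mult_nonneg_nonpos mult_nonpos_nonneg mult_nonpos_nonpos)
  with \<open>wronskian c b < wronskian c a\<close> show False
    by linarith
qed

lemma balance_point_before_first_zero:
  assumes "0 < \<xi>" "\<xi> < 1" "w \<xi> = 0" and pos: "\<And>r. r \<in> {0<..<\<xi>} \<Longrightarrow> w r > 0"
  obtains r1 where "0 < r1" "r1 < \<xi>" "- \<xi> * u1 \<xi> * f1 (u r1) = 2 * f (u r1)"
proof -
  define c where "c = - \<xi> * u1 \<xi>"
  have "wronskian c 0 = wronskian c \<xi>"
    using \<open>w \<xi> = 0\<close> by (simp add: wronskian_def c_def)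
  moreover have "wronskian c differentiable (at x)" if "0 < x" "x < \<xi>" for x
    using that assms wronskian_has_derivative[of x c] real_differentiable_def by auto
  moreover have "continuous_on {0..\<xi>} (wronskian c)"
    using assms by (intro continuous_on_subset[OF continuous_on_wronskian]) auto
  ultimately obtain r1 where r1: "0 < r1" "r1 < \<xi>" and "(wronskian c has_real_derivative 0) (at r1)"
    using Rolle[of 0 \<xi> "wronskian c"] \<open>0 < \<xi>\<close> by blast
  moreover have "(wronskian c has_real_derivative
      - (r1 * w r1 * (c * f1 (u r1) - 2 * f (u r1)))) (at r1)"
    using r1 assms by (intro wronskian_has_derivative) auto
  ultimately have "r1 * w r1 * (c * f1 (u r1) - 2 * f (u r1)) = 0"
    using DERIV_unique by fastforce
  with r1 pos[of r1] that show ?thesis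
    by (simp add: c_def)
qed

lemma negative_after_first_zero:
  assumes "0 < \<xi>" "\<xi> < 1" "w \<xi> = 0" and "\<And>r. r \<in> {0<..<\<xi>} \<Longrightarrow> w r > 0"
  obtains t where "\<xi> < t" "t < 1" "w t < 0"
proof -
  have "\<exists>t. \<xi> < t \<and> t < 1 \<and> w t < 0"
  proof (rule ccontr)
    assume "\<not> ?thesis"
    then have "w \<xi> \<le> w s" if "\<xi> < s" "s < 1" for s
      using that \<open>w \<xi> = 0\<close> by (metis not_less)
    then have "0 \<le> w1 \<xi>"
      using assms by (intro has_real_derivative_nonneg_at_left_min[OF DERIV_subset[OF w_d1]]) auto
    moreover have "w1 \<xi> < 0"
      using assms by (intro w1_neg_at_first_zero) auto
    ultimately show False
      by simp
  qed
  with that show ?thesis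
    by blast
qed

lemma first_zero_impossible:
  assumes "0 < \<xi>" "\<xi> < 1" "w \<xi> = 0" and pos: "\<And>r. r \<in> {0..<\<xi>} \<Longrightarrow> w r > 0"
  shows False
proof -
  interpret neg: radial_linearization f f1 f2 u u1 u2 "\<lambda>r. - w r" "\<lambda>r. - w1 r" "\<lambda>r. - w2 r"
    by (rule radial_linearization_uminus)
  define c where "c = - \<xi> * u1 \<xi>"
  obtain r1 where "0 < r1" "r1 < \<xi>" "c * f1 (u r1) = 2 * f (u r1)"
    by (rule balance_point_before_first_zero) (use assms in \<open>auto simp: c_def\<close>)
  then have balance: "c * f1 (u r) - 2 * f (u r) > 0" if "\<xi> < r" "r < 1" for r
    using that by (intro nonlinearity_balance_pos) auto
  have flux_nonpos: "s * u1 s + c \<le> 0" if "\<xi> \<le> s" "s \<le> 1" for s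
    using flux_strict_decreasing[of \<xi> s] that assms by (cases "s = \<xi>") (auto simp: c_def)
  obtain t where t: "\<xi> < t" "t < 1" "w t < 0"
    by (rule negative_after_first_zero) (use assms in auto)
  obtain a b where "\<xi> \<le> a" "a < t" "t < b" "b \<le> 1" "w a = 0" "w b = 0"
    and neg_w: "\<And>s. s \<in> {a<..<b} \<Longrightarrow> w s < 0"
    by (rule nodal_interval_around[of \<xi> 1 w t])
      (use t assms w_1 in \<open>auto intro: continuous_on_subset[OF continuous_on_w]\<close>)
  show False
  proof (rule neg.nodal_interval_impossible[of a b c])
    fix r assume r: "r \<in> {a<..<b}"
    then show "- w r > 0"
      using neg_w by simp
    show "c * f1 (u r) - 2 * f (u r) > 0"
      using r \<open>\<xi> \<le> a\<close> \<open>b \<le> 1\<close> by (intro balance) auto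
  qed (use \<open>\<xi> \<le> a\<close> \<open>a < t\<close> \<open>t < b\<close> \<open>b \<le> 1\<close> \<open>w a = 0\<close> \<open>w b = 0\<close> assms
      in \<open>auto intro: flux_nonpos\<close>)
qed

lemma no_interior_zero:
  assumes "w 0 \<noteq> 0" "r \<in> {0<..<1}"
  shows "w r \<noteq> 0"
proof
  assume "w r = 0"
  obtain \<xi> where "0 \<le> \<xi>" "\<xi> \<le> r" "w \<xi> = 0" and first: "\<And>s. 0 \<le> s \<Longrightarrow> s < \<xi> \<Longrightarrow> w s \<noteq> 0"
    by (rule first_zero_after[of 0 r w])
      (use assms \<open>w r = 0\<close> in \<open>auto intro: continuous_on_subset[OF continuous_on_w]\<close>)
  have "0 < \<xi>" "\<xi> < 1"
    using \<open>0 \<le> \<xi>\<close> \<open>\<xi> \<le> r\<close> \<open>w \<xi> = 0\<close> assms by (auto simp: less_eq_real_def)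
  have "(\<forall>s\<in>{0..<\<xi>}. w s > 0) \<or> (\<forall>s\<in>{0..<\<xi>}. w s < 0)"
    using first assms \<open>\<xi> \<le> r\<close>
    by (intro continuous_nonvanishing_imp_sign_constant continuous_on_subset[OF continuous_on_w]) auto
  then show False
  proof
    assume "\<forall>s\<in>{0..<\<xi>}. w s > 0"
    with \<open>0 < \<xi>\<close> \<open>\<xi> < 1\<close> \<open>w \<xi> = 0\<close> show False
      by (intro first_zero_impossible) auto
  next
    interpret neg: radial_linearization f f1 f2 u u1 u2 "\<lambda>r. - w r" "\<lambda>r. - w1 r" "\<lambda>r. - w2 r"
      by (rule radial_linearization_uminus)
    assume "\<forall>s\<in>{0..<\<xi>}. w s < 0"
    with \<open>0 < \<xi>\<close> \<open>\<xi> < 1\<close> \<open>w \<xi> = 0\<close> show False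
      by (intro neg.first_zero_impossible) auto
  qed
qed

end

theorem theorem3p1:
  fixes f f1 f2 :: "real \<Rightarrow> real"
    and u u1 u2 w w1 w2 :: "real \<Rightarrow> real"
  assumes f_d1: "\<And>x. x \<ge> 0 \<Longrightarrow> (f has_real_derivative f1 x) (at x within {0..})"
    and f_d2: "\<And>x. x \<ge> 0 \<Longrightarrow> (f1 has_real_derivative f2 x) (at x within {0..})"
    and f_C2: "continuous_on {0..} f2"
    and f_pos: "\<And>x. x > 0 \<Longrightarrow> f x > 0"
    and f1_pos: "\<And>x. x > 0 \<Longrightarrow> f1 x > 0"
    and f_logconc: "\<And>x. x > 0 \<Longrightarrow> f2 x * f x - (f1 x)\<^sup>2 < 0"
    and u_d1: "\<And>r. r \<in> {0..1} \<Longrightarrow> (u has_real_derivative u1 r) (at r within {0..1})"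
    and u_d2: "\<And>r. r \<in> {0..1} \<Longrightarrow> (u1 has_real_derivative u2 r) (at r within {0..1})"
    and u_C2: "continuous_on {0..1} u2"
    and u_eq: "\<And>r. r \<in> {0<..<1} \<Longrightarrow> u2 r + u1 r / r + f (u r) = 0"
    and u_bc: "u1 0 = 0" "u 1 = 0"
    and u_pos: "\<And>r. r \<in> {0..<1} \<Longrightarrow> u r > 0"
    and w_d1: "\<And>r. r \<in> {0..1} \<Longrightarrow> (w has_real_derivative w1 r) (at r within {0..1})"
    and w_d2: "\<And>r. r \<in> {0..1} \<Longrightarrow> (w1 has_real_derivative w2 r) (at r within {0..1})"
    and w_C2: "continuous_on {0..1} w2"
    and w_eq: "\<And>r. r \<in> {0<..<1} \<Longrightarrow> w2 r + w1 r / r + f1 (u r) * w r = 0"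
    and w_bc: "w1 0 = 0" "w 1 = 0"
    and w_nontriv: "\<exists>r\<in>{0..1}. w r \<noteq> 0"
  shows "(\<forall>r\<in>{0..<1}. w r > 0) \<or> (\<forall>r\<in>{0..<1}. w r < 0)"
proof -
  interpret lin: radial_linearization f f1 f2 u u1 u2 w w1 w2
    by unfold_locales (fact f_d1 f_d2 f_pos f1_pos f_logconc u_d1 u_d2 u_eq u_bc u_pos
        w_d1 w_d2 w_eq w_bc)+
  have "w 0 \<noteq> 0"
  proof
    assume "w 0 = 0"
    then have "w r = 0" if "r \<in> {0..1}" for r
      using radial_linear_ode_zero_at_centre[OF w_d1 w_d2 lin.continuous_on_f1_u w_eq _ w_bc(1) that]
      by blast
    with w_nontriv show False
      by blast
  qed
  then have "w r \<noteq> 0" if "r \<in> {0..<1}" for r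
    using lin.no_interior_zero[of r] that by (cases "r = 0") auto
  then show ?thesis
    by (intro continuous_nonvanishing_imp_sign_constant continuous_on_subset[OF lin.continuous_on_w])
      auto
qed

end
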